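(* Let $\langle (x_n,y_n)\rangle_{n\in\mathbb{N}}$ be the solutions in $\mathbb{N}^2$ of $x^2-19\,y^2=1$, indexed so that $y_0<y_1<\cdots$. Let $\bar r,\bar s,\bar v,\bar u\in\mathbb{Z}$ satisfy \[171\,(\bar r^2+\bar r\bar s+5\bar s^2)^2-169\,(\bar v^2+\bar v\bar u+5\bar u^2)^2=2\] with $\bar r\neq\pm1$ or $\bar s\neq 0$. Then for every $\ell\geq 0$, \[ 39\,(\bar r^2+\bar r\bar s+5\bar s^2)(\bar v^2+\bar v\bar u+5\bar u^2)\nmid y_{2^{2\ell+1}}. \]
   Context: $(x_0,y_0)=(1,0)$, $(x_1,y_1)=(170,39)$, $x_n+y_n\sqrt{19}=(170+39\sqrt{19})^n$. *)

theory Defs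
  imports Main
begin

text \<open>Solutions of x^2 - 19 y^2 = 1 in N^2, indexed increasingly:
  x_n + y_n sqrt 19 = (170 + 39 sqrt 19)^n, written out as the recurrence
  obtained by multiplying by 170 + 39 sqrt 19.\<close>
fun pell19 :: "nat \<Rightarrow> int \<times> int" where
  "pell19 0 = (1, 0)"
| "pell19 (Suc n) = (170 * fst (pell19 n) + 19 * 39 * snd (pell19 n),
                     39 * fst (pell19 n) + 170 * snd (pell19 n))"

definition xP :: "nat \<Rightarrow> int" where "xP n = fst (pell19 n)"
definition yP :: "nat \<Rightarrow> int" where "yP n = snd (pell19 n)"

definition Q19 :: "int \<Rightarrow> int \<Rightarrow> int" where
  "Q19 a b = a^2 + a*b + 5*b^2"

end

theory Submission
  imports Defs
begin

text \<open>Put \<open>A = Q19 r s\<close> and \<open>B = Q19 v u\<close>. The hypothesis \<open>171 A\<^sup>2 = 169 B\<^sup>2 + 2\<close> says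
  exactly that \<open>(169 B\<^sup>2 + 1, 39 A B)\<close> solves \<open>x\<^sup>2 - 19 y\<^sup>2 = 1\<close>, so it is some \<open>(x\<^sub>n, y\<^sub>n)\<close>;
  since \<open>B\<close> is odd, \<open>x\<^sub>n\<close> is even, which forces \<open>n\<close> to be odd. The sequence \<open>y\<close> is a strong
  divisibility sequence, \<open>gcd y\<^sub>m y\<^sub>n = y\<^bsub>gcd m n\<^esub>\<close>, and strictly increasing, so
  \<open>y\<^sub>n dvd y\<^sub>m\<close> iff \<open>n dvd m\<close>. An odd divisor of a power of 2 is 1, hence \<open>39 A B = y\<^sub>1 = 39\<close>,
  so \<open>A = 1\<close>, which forces \<open>s = 0\<close> and \<open>r = \<plusminus>1\<close>.\<close>

lemma xP_Suc: "xP (Suc n) = 170 * xP n + 741 * yP n"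
  by (simp add: xP_def yP_def)

lemma yP_Suc: "yP (Suc n) = 39 * xP n + 170 * yP n"
  by (simp add: xP_def yP_def)

lemma pell19_eq: "(xP n)\<^sup>2 - 19 * (yP n)\<^sup>2 = 1"
  by (induction n) (auto simp: xP_def yP_def algebra_simps power2_eq_square)

lemma xP_pos: "xP n > 0" and yP_nonneg: "yP n \<ge> 0"
  by (induction n) (auto simp: xP_Suc yP_Suc, simp_all add: xP_def yP_def)

lemma yP_strict_mono: "strict_mono yP"
  unfolding strict_mono_Suc_iff yP_Suc using xP_pos yP_nonneg by (simp add: add_nonneg_pos)

lemma even_xP_iff: "even (xP n) \<longleftrightarrow> odd n"
proof -
  have "(even (xP n) \<longleftrightarrow> odd n) \<and> (even (yP n) \<longleftrightarrow> even n)"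
    by (induction n) (auto simp: xP_Suc yP_Suc, auto simp: xP_def yP_def)
  then show ?thesis by simp
qed

lemma not_square_between:
  fixes k x :: int
  assumes "0 \<le> k" "k\<^sup>2 < x\<^sup>2" "x\<^sup>2 < (k + 1)\<^sup>2"
  shows False
proof -
  have "k < \<bar>x\<bar>" using assms(2) power2_less_imp_less[of k "\<bar>x\<bar>"] by simp
  moreover have "\<bar>x\<bar> < k + 1" using assms power2_less_imp_less[of "\<bar>x\<bar>" "k + 1"] by simp
  ultimately show False by simp
qed

text \<open>For each \<open>y\<close> below 39, \<open>19 y\<^sup>2 + 1\<close> lies
  strictly between two consecutive squares, the smaller one being the square of
  \<open>\<lfloor>4.359 y\<rfloor> \<approx> \<lfloor>\<surd>19 y\<rfloor>\<close>.\<close>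
lemma pell19_no_small_solution:
  fixes x y :: int
  assumes "x\<^sup>2 - 19 * y\<^sup>2 = 1" "0 < y" "y < 39"
  shows False
proof -
  have table: "\<forall>y\<in>{1..38::int}. (4359 * y div 1000)\<^sup>2 < 19 * y\<^sup>2 + 1
                  \<and> 19 * y\<^sup>2 + 1 < (4359 * y div 1000 + 1)\<^sup>2"
    by code_simp
  have "y \<in> {1..38}" using assms(2,3) by simp
  moreover have "x\<^sup>2 = 19 * y\<^sup>2 + 1" using assms(1) by simp
  ultimately have "(4359 * y div 1000)\<^sup>2 < x\<^sup>2" "x\<^sup>2 < (4359 * y div 1000 + 1)\<^sup>2"
    using table by simp_all
  moreover have "0 \<le> 4359 * y div 1000" using assms(2) by simp
  ultimately show False using not_square_between by blast
qed

text \<open>Multiplying by \<open>170 - 39\<surd>19\<close> maps a solution with \<open>y \<ge> 39\<close> to a smaller one.\<close>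
lemma pell19_descent:
  fixes x y :: int
  assumes eq: "x\<^sup>2 - 19 * y\<^sup>2 = 1" and "0 < x" "39 \<le> y"
  shows "0 < 170 * x - 741 * y" "0 \<le> 170 * y - 39 * x" "170 * y - 39 * x < y"
proof -
  have x2: "x\<^sup>2 = 1 + 19 * y\<^sup>2" using eq by simp
  have "39\<^sup>2 \<le> y\<^sup>2" using assms(3) by (intro power_mono) auto
  then have "(39 * x)\<^sup>2 \<le> (170 * y)\<^sup>2" using x2 by (simp add: power_mult_distrib)
  then show "0 \<le> 170 * y - 39 * x"
    using power2_le_imp_le[of "39 * x" "170 * y"] assms(3) by simp
  have "(169 * y)\<^sup>2 < (39 * x)\<^sup>2" using x2 by (simp add: power_mult_distrib add_nonneg_pos)
  then show "170 * y - 39 * x < y"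
    using power2_less_imp_less[of "169 * y" "39 * x"] assms(2) by simp
  have "(741 * y)\<^sup>2 < (170 * x)\<^sup>2" using x2 by (simp add: power_mult_distrib add_nonneg_pos)
  then show "0 < 170 * x - 741 * y"
    using power2_less_imp_less[of "741 * y" "170 * x"] assms(2) by simp
qed

lemma pell19_solution_in_sequence:
  fixes x y :: int
  assumes "0 < x" "0 \<le> y" "x\<^sup>2 - 19 * y\<^sup>2 = 1"
  shows "\<exists>n. xP n = x \<and> yP n = y"
  using assms
proof (induction "nat y" arbitrary: x y rule: less_induct)
  case less
  show ?case
  proof (cases "y = 0")
    case True
    then have "x = 1" using less.prems power2_eq_1_iff[of x] by auto
    with True show ?thesis by (intro exI[of _ 0]) (simp add: xP_def yP_def)
  next
    case False
    then have "39 \<le> y"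
      using pell19_no_small_solution[of x y] less.prems by force
    define x' where "x' = 170 * x - 741 * y"
    define y' where "y' = 170 * y - 39 * x"
    have "x'\<^sup>2 - 19 * y'\<^sup>2 = x\<^sup>2 - 19 * y\<^sup>2"
      unfolding x'_def y'_def by algebra
    moreover note pell19_descent[OF less.prems(3,1) \<open>39 \<le> y\<close>, folded x'_def y'_def]
    ultimately obtain n where "xP n = x'" "yP n = y'"
      using less.hyps[of y' x'] less.prems(3) by fastforce
    then show ?thesis
      by (intro exI[of _ "Suc n"]) (simp add: xP_Suc yP_Suc x'_def y'_def)
  qed
qed

lemma yP_add: "yP (m + n) = xP m * yP n + xP n * yP m"
proof -
  have "yP (m + n) = xP m * yP n + xP n * yP m \<and> xP (m + n) = xP m * xP n + 19 * yP m * yP n"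
    by (induction m) (simp_all add: xP_Suc yP_Suc algebra_simps, simp_all add: xP_def yP_def)
  then show ?thesis by simp
qed

lemma coprime_xP_yP: "coprime (xP n) (yP n)"
proof (rule coprimeI)
  fix c assume "c dvd xP n" "c dvd yP n"
  then have "c dvd xP n * xP n - 19 * yP n * yP n" by simp
  then show "is_unit c" using pell19_eq[of n] by (simp add: power2_eq_square mult.assoc)
qed

lemma gcd_yP_add: "gcd (yP m) (yP (n + m)) = gcd (yP m) (yP n)"
proof -
  have "gcd (yP m) (yP (n + m)) = gcd (yP m) (xP m * yP n)"
    using gcd_add_mult[of "yP m" "xP n" "xP m * yP n"] by (simp add: yP_add ac_simps)
  also have "\<dots> = gcd (yP m) (yP n)"
    using coprime_xP_yP[of m] by (intro gcd_mult_right_left_cancel) (simp add: coprime_commute)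
  finally show ?thesis .
qed

lemma gcd_yP_mod: "gcd (yP m) (yP (n mod m)) = gcd (yP m) (yP n)"
proof (induction n rule: less_induct)
  case (less n)
  show ?case
  proof (cases "0 < m \<and> m \<le> n")
    case True
    then have "gcd (yP m) (yP (n mod m)) = gcd (yP m) (yP ((n - m) mod m))"
      by (simp add: le_mod_geq)
    also have "\<dots> = gcd (yP m) (yP (n - m))" using True less.IH[of "n - m"] by simp
    also have "\<dots> = gcd (yP m) (yP n)" using True gcd_yP_add[of m "n - m"] by simp
    finally show ?thesis .
  qed auto
qed

lemma yP_gcd: "yP (gcd m n) = gcd (yP m) (yP n)"
proof (induction m n rule: gcd_nat_induct)
  case (base m)
  then show ?case using yP_nonneg[of m] by (simp add: yP_def)
next
  case (step m n)
  then show ?case by (simp add: gcd_non_0_nat gcd.commute gcd_yP_mod)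
qed

lemma yP_dvd_yP_iff: "yP n dvd yP m \<longleftrightarrow> n dvd m"
proof
  assume "yP n dvd yP m"
  then have "yP (gcd n m) = yP n" using yP_gcd[of n m] yP_nonneg[of n] by (simp add: gcd_proj1_iff)
  then have "gcd n m = n" using strict_mono_eq[OF yP_strict_mono] by blast
  then show "n dvd m" using gcd_dvd2[of n m] by simp
next
  assume "n dvd m"
  then have "gcd n m = n" by (simp add: gcd_proj1_iff)
  then show "yP n dvd yP m" using yP_gcd[of n m] gcd_dvd2[of "yP n" "yP m"] by simp
qed

lemma four_Q19: "4 * Q19 a b = (2 * a + b)\<^sup>2 + 19 * b\<^sup>2"
  by (simp add: Q19_def algebra_simps power2_eq_square)

lemma Q19_nonneg: "0 \<le> Q19 a b"
  using four_Q19[of a b] zero_le_power2[of "2 * a + b"] zero_le_power2[of b] by linarith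

lemma Q19_eq_1_iff: "Q19 a b = 1 \<longleftrightarrow> (a = 1 \<or> a = -1) \<and> b = 0"
proof
  assume "Q19 a b = 1"
  then have e: "(2 * a + b)\<^sup>2 + 19 * b\<^sup>2 = 4" using four_Q19[of a b] by simp
  then have "b\<^sup>2 < 1" using zero_le_power2[of "2 * a + b"] by linarith
  then have "b = 0" by (simp add: abs_square_less_1)
  with e have "a\<^sup>2 = 1" by (simp add: power_mult_distrib)
  with \<open>b = 0\<close> show "(a = 1 \<or> a = -1) \<and> b = 0" by (simp add: power2_eq_1_iff)
qed (auto simp: Q19_def)

lemma odd_of_171_169_eq:
  fixes A B :: int
  assumes "171 * A\<^sup>2 - 169 * B\<^sup>2 = 2"
  shows "odd B"
proof
  assume "even B"
  then obtain b where b: "B = 2 * b" by blast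
  with assms have "171 * A\<^sup>2 = 2 * (1 + 338 * b\<^sup>2)" by (simp add: power_mult_distrib)
  then have "even (171 * A\<^sup>2)" by simp
  then have "even A" by simp
  then obtain a where "A = 2 * a" by blast
  with assms b have "2 = 4 * (171 * a\<^sup>2 - 169 * b\<^sup>2)" by (simp add: power_mult_distrib)
  then have "(4::int) dvd 2" by (metis dvd_triv_left)
  then show False by simp
qed

lemma pell19_of_171_169_eq:
  fixes A B :: int
  assumes "171 * A\<^sup>2 - 169 * B\<^sup>2 = 2"
  shows "(169 * B\<^sup>2 + 1)\<^sup>2 - 19 * (39 * A * B)\<^sup>2 = 1"
proof -
  have "(169 * B\<^sup>2 + 1)\<^sup>2 - 1 = (169 * B\<^sup>2) * (169 * B\<^sup>2 + 2)" by algebra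
  also have "\<dots> = 169 * B\<^sup>2 * (171 * A\<^sup>2)" using assms by simp
  also have "\<dots> = 19 * (39 * A * B)\<^sup>2" by algebra
  finally show ?thesis by simp
qed

theorem mainTheorem8:
  fixes r s v u :: int and l :: nat
  assumes "171 * (Q19 r s)^2 - 169 * (Q19 v u)^2 = 2"
    and "(r \<noteq> 1 \<and> r \<noteq> -1) \<or> s \<noteq> 0"
  shows "\<not> (39 * Q19 r s * Q19 v u dvd yP (2^(2*l+1)))"
proof
  let ?A = "Q19 r s" and ?B = "Q19 v u"
  assume dvd: "39 * ?A * ?B dvd yP (2^(2*l+1))"
  obtain n where n: "xP n = 169 * ?B\<^sup>2 + 1" "yP n = 39 * ?A * ?B"
    using pell19_solution_in_sequence[OF _ _ pell19_of_171_169_eq[OF assms(1)]]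
    by (auto simp: Q19_nonneg add_pos_nonneg)
  have "odd n" using even_xP_iff[of n] n(1) odd_of_171_169_eq[OF assms(1)] by simp
  moreover have "n dvd 2^(2*l+1)" using dvd by (simp only: n(2) [symmetric] yP_dvd_yP_iff)
  ultimately have "n = 1" using coprime_absorb_left[of n "2^(2*l+1)"] by simp
  then have "?A * ?B = 1" using n(2) by (simp add: yP_def)
  then have "?A = 1" using Q19_nonneg[of r s] Q19_nonneg[of v u] by (auto simp: zmult_eq_1_iff)
  then show False using Q19_eq_1_iff[of r s] assms(2) by simp
qed

end
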